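(* Let $s_\alpha$ be a defining map for $\Lambda^{d-k}\subset(M,g)$ with Gram matrix $G_{\alpha\beta}=\delta_{\alpha\beta}+\mathcal O(s^2)$, and set $n_{a\alpha}:=\nabla_a s_\alpha$ (so $\{n_\alpha|_\Lambda\}$ is an orthonormal frame of $N\Lambda$). Then along $\Lambda$ $$n^b_\alpha\nabla_a n_{b\beta}=\beta_{a\alpha\beta},\qquad \nabla_a n_{b\beta}={\rm II}_{ab\beta}+n_{b\alpha}\beta_{a\alpha\beta}+n_{a\alpha}\beta_{b\alpha\beta},$$ and $[n_\alpha,n_\beta]^a=2\beta^a{}_{\alpha\beta}$ on $\Lambda$.
   Context: $(M,g)$ Riemannian with Levi-Civita connection $\nabla$; Greek indices in $\{1,\dots,k\}$, repeated ones summed. Gram matrix $G_{\alpha\beta}=g^{ab}\nabla_as_\alpha\nabla_bs_\beta$; $\mathcal O(s^2)$ means a finite sum of terms $s_\gamma s_\delta T_{\gamma\delta}$ with $T$ smooth. $\bar g^a_b=\delta^a_b-n^a_\alpha n_{b\alpha}$, $\nabla^\top_a=\bar g^b_a\nabla_b$. Second fundamental form ${\rm II}_{ab\alpha}:=\bar g_{bc}\nabla^\top_a n^c_\alpha$; normal fundamental form $\beta_{a\alpha\beta}:=n^b_\alpha\nabla^\top_an_{b\beta}$ (both computed from the frame $n_\alpha|_\Lambda$). *)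

theory Defs
  imports "HOL-Analysis.Analysis"
begin

text \<open>Local-coordinate model: the Riemannian manifold is an open set U of real^'d
 with metric components g x (a symmetric positive definite matrix at each point).
 Latin indices range over 'd, Greek indices over the finite type 'k.\<close>

definition pd :: "'d::finite \<Rightarrow> (real^'d \<Rightarrow> real) \<Rightarrow> real^'d \<Rightarrow> real" where
  "pd i f x = frechet_derivative f (at x) (axis i 1)"

fun Ck :: "nat \<Rightarrow> (real^'d::finite) set \<Rightarrow> (real^'d \<Rightarrow> real) \<Rightarrow> bool" where
  "Ck 0 U f = continuous_on U f"
| "Ck (Suc n) U f = (f differentiable_on U \<and> (\<forall>i. Ck n U (pd i f)))"

definition smooth_on :: "(real^'d::finite) set \<Rightarrow> (real^'d \<Rightarrow> real) \<Rightarrow> bool" where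
  "smooth_on U f = (\<forall>n. Ck n U f)"

definition riemannian_metric :: "(real^'d::finite) set \<Rightarrow> (real^'d \<Rightarrow> real^'d^'d) \<Rightarrow> bool" where
  "riemannian_metric U g = (open U \<and> (\<forall>a b. smooth_on U (\<lambda>x. g x $ a $ b)) \<and>
     (\<forall>x\<in>U. transpose (g x) = g x \<and> (\<forall>v. v \<noteq> 0 \<longrightarrow> v \<bullet> (g x *v v) > 0)))"

definition ginv :: "(real^'d::finite \<Rightarrow> real^'d^'d) \<Rightarrow> real^'d \<Rightarrow> 'd \<Rightarrow> 'd \<Rightarrow> real" where
  "ginv g x a b = matrix_inv (g x) $ a $ b"

definition Gamma :: "(real^'d::finite \<Rightarrow> real^'d^'d) \<Rightarrow> 'd \<Rightarrow> 'd \<Rightarrow> 'd \<Rightarrow> real^'d \<Rightarrow> real" where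
  "Gamma g c a b x = (1/2) * (\<Sum>e\<in>UNIV. ginv g x c e *
      (pd a (\<lambda>y. g y $ e $ b) x + pd b (\<lambda>y. g y $ e $ a) x - pd e (\<lambda>y. g y $ a $ b) x))"

definition cov_form :: "(real^'d::finite \<Rightarrow> real^'d^'d) \<Rightarrow> ('d \<Rightarrow> real^'d \<Rightarrow> real) \<Rightarrow> 'd \<Rightarrow> 'd \<Rightarrow> real^'d \<Rightarrow> real" where
  "cov_form g w a b x = pd a (w b) x - (\<Sum>c\<in>UNIV. Gamma g c a b x * w c x)"

definition cov_vec :: "(real^'d::finite \<Rightarrow> real^'d^'d) \<Rightarrow> ('d \<Rightarrow> real^'d \<Rightarrow> real) \<Rightarrow> 'd \<Rightarrow> 'd \<Rightarrow> real^'d \<Rightarrow> real" where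
  "cov_vec g V a c x = pd a (V c) x + (\<Sum>e\<in>UNIV. Gamma g c a e x * V e x)"

definition lie_bracket :: "('d \<Rightarrow> real^'d::finite \<Rightarrow> real) \<Rightarrow> ('d \<Rightarrow> real^'d \<Rightarrow> real) \<Rightarrow> 'd \<Rightarrow> real^'d \<Rightarrow> real" where
  "lie_bracket X Y a x = (\<Sum>b\<in>UNIV. X b x * pd b (Y a) x - Y b x * pd b (X a) x)"

definition nlow :: "('k \<Rightarrow> real^'d::finite \<Rightarrow> real) \<Rightarrow> 'k \<Rightarrow> 'd \<Rightarrow> real^'d \<Rightarrow> real" where
  "nlow s \<alpha> a x = pd a (s \<alpha>) x"

definition nup :: "(real^'d::finite \<Rightarrow> real^'d^'d) \<Rightarrow> ('k \<Rightarrow> real^'d \<Rightarrow> real) \<Rightarrow> 'k \<Rightarrow> 'd \<Rightarrow> real^'d \<Rightarrow> real" where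
  "nup g s \<alpha> a x = (\<Sum>b\<in>UNIV. ginv g x a b * nlow s \<alpha> b x)"

definition gram :: "(real^'d::finite \<Rightarrow> real^'d^'d) \<Rightarrow> ('k \<Rightarrow> real^'d \<Rightarrow> real) \<Rightarrow> 'k \<Rightarrow> 'k \<Rightarrow> real^'d \<Rightarrow> real" where
  "gram g s \<alpha> \<beta> x = (\<Sum>a\<in>UNIV. \<Sum>b\<in>UNIV. ginv g x a b * nlow s \<alpha> a x * nlow s \<beta> b x)"

definition defining_map :: "(real^'d::finite) set \<Rightarrow> ('k::finite \<Rightarrow> real^'d \<Rightarrow> real) \<Rightarrow> (real^'d) set \<Rightarrow> bool" where
  "defining_map U s Lam = ((\<forall>\<alpha>. smooth_on U (s \<alpha>)) \<and> Lam = {x\<in>U. \<forall>\<alpha>. s \<alpha> x = 0} \<and>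
     (\<forall>x\<in>Lam. \<forall>c::'k \<Rightarrow> real. (\<forall>a. (\<Sum>\<alpha>\<in>UNIV. c \<alpha> * nlow s \<alpha> a x) = 0) \<longrightarrow> (\<forall>\<alpha>. c \<alpha> = 0)))"

definition gram_delta_Os2 :: "(real^'d::finite) set \<Rightarrow> (real^'d \<Rightarrow> real^'d^'d) \<Rightarrow> ('k::finite \<Rightarrow> real^'d \<Rightarrow> real) \<Rightarrow> bool" where
  "gram_delta_Os2 U g s = (\<exists>T :: 'k \<Rightarrow> 'k \<Rightarrow> 'k \<Rightarrow> 'k \<Rightarrow> real^'d \<Rightarrow> real.
     (\<forall>\<gamma> \<delta> \<alpha> \<beta>. smooth_on U (T \<gamma> \<delta> \<alpha> \<beta>)) \<and>
     (\<forall>x\<in>U. \<forall>\<alpha> \<beta>. gram g s \<alpha> \<beta> x = (if \<alpha> = \<beta> then 1 else 0) +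
        (\<Sum>\<gamma>\<in>UNIV. \<Sum>\<delta>\<in>UNIV. s \<gamma> x * s \<delta> x * T \<gamma> \<delta> \<alpha> \<beta> x)))"

definition gbar :: "(real^'d::finite \<Rightarrow> real^'d^'d) \<Rightarrow> ('k::finite \<Rightarrow> real^'d \<Rightarrow> real) \<Rightarrow> 'd \<Rightarrow> 'd \<Rightarrow> real^'d \<Rightarrow> real" where
  "gbar g s a b x = (if a = b then 1 else 0) - (\<Sum>\<alpha>\<in>UNIV. nup g s \<alpha> a x * nlow s \<alpha> b x)"

definition gbar_low :: "(real^'d::finite \<Rightarrow> real^'d^'d) \<Rightarrow> ('k::finite \<Rightarrow> real^'d \<Rightarrow> real) \<Rightarrow> 'd \<Rightarrow> 'd \<Rightarrow> real^'d \<Rightarrow> real" where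
  "gbar_low g s a b x = g x $ a $ b - (\<Sum>\<alpha>\<in>UNIV. nlow s \<alpha> a x * nlow s \<alpha> b x)"

definition second_ff :: "(real^'d::finite \<Rightarrow> real^'d^'d) \<Rightarrow> ('k::finite \<Rightarrow> real^'d \<Rightarrow> real) \<Rightarrow> 'd \<Rightarrow> 'd \<Rightarrow> 'k \<Rightarrow> real^'d \<Rightarrow> real" where
  "second_ff g s a b \<beta> x = (\<Sum>c\<in>UNIV. gbar_low g s b c x *
      (\<Sum>d\<in>UNIV. gbar g s d a x * cov_vec g (\<lambda>e. nup g s \<beta> e) d c x))"

definition normal_ff :: "(real^'d::finite \<Rightarrow> real^'d^'d) \<Rightarrow> ('k::finite \<Rightarrow> real^'d \<Rightarrow> real) \<Rightarrow> 'd \<Rightarrow> 'k \<Rightarrow> 'k \<Rightarrow> real^'d \<Rightarrow> real" where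
  "normal_ff g s a \<alpha> \<beta> x = (\<Sum>b\<in>UNIV. nup g s \<alpha> b x *
      (\<Sum>d\<in>UNIV. gbar g s d a x * cov_form g (\<lambda>e. nlow s \<beta> e) d b x))"

end

theory Submission
  imports Defs
begin

text \<open>Put \<open>H\<^sub>\<beta>\<^sub>a\<^sub>b = \<nabla>\<^sub>a n\<^sub>b\<^sub>\<beta>\<close>. It is symmetric in \<open>a, b\<close>, being the Hessian of \<open>s\<^sub>\<beta>\<close> for a
  torsion-free connection; and since \<open>G = \<delta> + O(s\<^sup>2)\<close> has vanishing derivative on \<open>\<Lambda>\<close>, the Leibniz
  rule \<open>\<nabla>\<^sub>a G\<^sub>\<alpha>\<^sub>\<beta> = n\<^sup>b\<^sub>\<alpha> H\<^sub>\<beta>\<^sub>a\<^sub>b + n\<^sup>b\<^sub>\<beta> H\<^sub>\<alpha>\<^sub>a\<^sub>b\<close> makes \<open>n\<^sup>b\<^sub>\<alpha> H\<^sub>\<beta>\<^sub>a\<^sub>b\<close> antisymmetric in \<open>\<alpha>, \<beta>\<close>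
  there. The fully normal block \<open>n\<^sup>a\<^sub>\<gamma> n\<^sup>b\<^sub>\<alpha> H\<^sub>\<beta>\<^sub>a\<^sub>b\<close> is then symmetric in \<open>\<gamma>, \<alpha>\<close> and
  antisymmetric in \<open>\<alpha>, \<beta>\<close>, hence zero. So projecting the \<open>a\<close>-slot of \<open>n\<^sup>b\<^sub>\<alpha> H\<^sub>\<beta>\<^sub>a\<^sub>b\<close> tangentially
  changes nothing, which is the first identity; decomposing both slots of \<open>H\<close> by
  \<open>\<delta> = gbar + n n\<close> gives the second; and in \<open>[n\<^sub>\<alpha>, n\<^sub>\<beta>] = \<nabla>\<^sub>n\<^sub>\<alpha> n\<^sub>\<beta> - \<nabla>\<^sub>n\<^sub>\<beta> n\<^sub>\<alpha>\<close> the two terms are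
  opposite by antisymmetry, giving the factor 2.\<close>

lemma pd_eq_has_derivative: "(f has_derivative f') (at x) \<Longrightarrow> pd i f x = f' (axis i 1)"
  unfolding pd_def by (metis frechet_derivative_at)

lemma pd_mult:
  assumes "f differentiable (at x)" "h differentiable (at x)"
  shows "pd i (\<lambda>y. f y * h y) x = pd i f x * h x + f x * pd i h x"
  using pd_eq_has_derivative[OF has_derivative_mult[OF assms[THEN frechet_derivative_works[THEN iffD1]]]]
  unfolding pd_def by simp

lemma pd_add:
  assumes "f differentiable (at x)" "h differentiable (at x)"
  shows "pd i (\<lambda>y. f y + h y) x = pd i f x + pd i h x"
  using pd_eq_has_derivative[OF has_derivative_add[OF assms[THEN frechet_derivative_works[THEN iffD1]]]]
  unfolding pd_def by simp

lemma pd_sum: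
  assumes "\<And>j. j \<in> A \<Longrightarrow> f j differentiable (at x)"
  shows "pd i (\<lambda>y. \<Sum>j\<in>A. f j y) x = (\<Sum>j\<in>A. pd i (f j) x)"
proof -
  have "((\<lambda>y. \<Sum>j\<in>A. f j y) has_derivative (\<lambda>v. \<Sum>j\<in>A. frechet_derivative (f j) (at x) v)) (at x)"
    using assms by (intro has_derivative_sum) (simp add: frechet_derivative_works[symmetric])
  from pd_eq_has_derivative[OF this] show ?thesis unfolding pd_def by simp
qed

lemma pd_const: "pd i (\<lambda>y. c) x = 0"
  unfolding pd_def by simp

lemma pd_cong_open:
  assumes "f differentiable (at x)" "open U" "x \<in> U" "\<And>y. y \<in> U \<Longrightarrow> f y = h y"
  shows "pd i f x = pd i h x"
  unfolding pd_def using frechet_derivative_transform_within_open[OF assms] by simp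

lemma has_real_derivative_on_line:
  fixes f :: "real^'d::finite \<Rightarrow> real"
  assumes "f differentiable (at (p + u *\<^sub>R e))"
  shows "((\<lambda>t. f (p + t *\<^sub>R e)) has_real_derivative frechet_derivative f (at (p + u *\<^sub>R e)) e) (at u)"
proof -
  let ?f' = "frechet_derivative f (at (p + u *\<^sub>R e))"
  have "((\<lambda>t. p + t *\<^sub>R e) has_derivative (\<lambda>h. h *\<^sub>R e)) (at u)"
    by (auto intro!: derivative_eq_intros)
  from diff_chain_at[OF this frechet_derivative_works[THEN iffD1, OF assms]]
  have "((\<lambda>t. f (p + t *\<^sub>R e)) has_derivative (\<lambda>h. ?f' (h *\<^sub>R e))) (at u)"
    by (simp add: o_def)
  moreover have "(\<lambda>h. ?f' (h *\<^sub>R e)) = (*) (?f' e)"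
    using linear_cmul[OF linear_frechet_derivative[OF assms]] by (auto simp: mult.commute)
  ultimately show ?thesis unfolding has_field_derivative_def by simp
qed

lemma axis_steps_in_ball:
  fixes x :: "real^'d::finite"
  assumes "\<bar>a\<bar> \<le> t" "\<bar>b\<bar> \<le> t" "2 * t < r"
  shows "x + a *\<^sub>R axis i 1 + b *\<^sub>R axis j 1 \<in> ball x r"
proof -
  have "norm (a *\<^sub>R axis i (1::real) + b *\<^sub>R axis j 1) \<le> \<bar>a\<bar> + \<bar>b\<bar>"
    using norm_triangle_ineq[of "a *\<^sub>R axis i (1::real)" "b *\<^sub>R axis j 1"] by simp
  then show ?thesis using assms by (simp add: dist_norm add.assoc norm_minus_commute add.commute)
qed

lemma second_difference_mvt:
  fixes f :: "real^'d::finite \<Rightarrow> real"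
  assumes sub: "ball x r \<subseteq> U" and t: "0 < t" "2 * t < r"
    and df: "\<And>y. y \<in> U \<Longrightarrow> f differentiable (at y)"
    and dfi: "\<And>y. y \<in> U \<Longrightarrow> pd i f differentiable (at y)"
  shows "\<exists>\<xi> \<eta>. 0 < \<xi> \<and> \<xi> < t \<and> 0 < \<eta> \<and> \<eta> < t \<and>
     f (x + t *\<^sub>R axis i 1 + t *\<^sub>R axis j 1) - f (x + t *\<^sub>R axis i 1) - f (x + t *\<^sub>R axis j 1) + f x
      = t * t * pd j (pd i f) (x + \<xi> *\<^sub>R axis i 1 + \<eta> *\<^sub>R axis j 1)"
proof -
  let ?ei = "axis i (1::real) :: real^'d" and ?ej = "axis j (1::real) :: real^'d"
  have inU: "\<And>a b. \<bar>a\<bar> \<le> t \<Longrightarrow> \<bar>b\<bar> \<le> t \<Longrightarrow> x + a *\<^sub>R ?ei + b *\<^sub>R ?ej \<in> U"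
    using axis_steps_in_ball[OF _ _ t(2)] sub by blast
  define \<phi> where "\<phi> u = f ((x + t *\<^sub>R ?ej) + u *\<^sub>R ?ei) - f (x + u *\<^sub>R ?ei)" for u
  have "DERIV \<phi> u :> pd i f ((x + t *\<^sub>R ?ej) + u *\<^sub>R ?ei) - pd i f (x + u *\<^sub>R ?ei)"
    if "0 \<le> u" "u \<le> t" for u
  proof -
    have "(x + t *\<^sub>R ?ej) + u *\<^sub>R ?ei \<in> U" "x + u *\<^sub>R ?ei \<in> U"
      using inU[of u t] inU[of u 0] that t by (simp_all add: algebra_simps)
    then show ?thesis
      unfolding \<phi>_def pd_def by (intro DERIV_diff has_real_derivative_on_line df)
  qed
  from MVT2[OF t(1) this] obtain \<xi> where xi: "0 < \<xi>" "\<xi> < t"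
    "\<phi> t - \<phi> 0 = t * (pd i f ((x + t *\<^sub>R ?ej) + \<xi> *\<^sub>R ?ei) - pd i f (x + \<xi> *\<^sub>R ?ei))"
    by auto
  define \<psi> where "\<psi> v = pd i f ((x + \<xi> *\<^sub>R ?ei) + v *\<^sub>R ?ej)" for v
  have "DERIV \<psi> v :> pd j (pd i f) ((x + \<xi> *\<^sub>R ?ei) + v *\<^sub>R ?ej)" if "0 \<le> v" "v \<le> t" for v
    unfolding \<psi>_def pd_def[of j]
    using inU[of \<xi> v] that xi by (intro has_real_derivative_on_line dfi) simp
  from MVT2[OF t(1) this] obtain \<eta> where eta: "0 < \<eta>" "\<eta> < t"
    "\<psi> t - \<psi> 0 = t * pd j (pd i f) ((x + \<xi> *\<^sub>R ?ei) + \<eta> *\<^sub>R ?ej)"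
    by auto
  have "f (x + t *\<^sub>R ?ei + t *\<^sub>R ?ej) - f (x + t *\<^sub>R ?ei) - f (x + t *\<^sub>R ?ej) + f x = \<phi> t - \<phi> 0"
    unfolding \<phi>_def by (simp add: algebra_simps)
  also have "\<dots> = t * (\<psi> t - \<psi> 0)"
    unfolding xi(3) \<psi>_def by (simp add: algebra_simps)
  also have "\<dots> = t * t * pd j (pd i f) (x + \<xi> *\<^sub>R ?ei + \<eta> *\<^sub>R ?ej)"
    unfolding eta(3) by simp
  finally show ?thesis using xi eta by blast
qed

text \<open>Schwarz's theorem: both mixed partials are limits of the same second difference quotient.\<close>
lemma pd_pd_commute:
  fixes f :: "real^'d::finite \<Rightarrow> real"
  assumes U: "open U" "x \<in> U"
    and df: "\<And>y. y \<in> U \<Longrightarrow> f differentiable (at y)"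
    and dfi: "\<And>y. y \<in> U \<Longrightarrow> pd i f differentiable (at y)"
    and dfj: "\<And>y. y \<in> U \<Longrightarrow> pd j f differentiable (at y)"
    and ci: "continuous_on U (pd j (pd i f))"
    and cj: "continuous_on U (pd i (pd j f))"
  shows "pd j (pd i f) x = pd i (pd j f) x"
proof (rule ccontr)
  let ?ei = "axis i (1::real) :: real^'d" and ?ej = "axis j (1::real) :: real^'d"
  let ?D1 = "pd j (pd i f) x" and ?D2 = "pd i (pd j f) x"
  assume ne: "?D1 \<noteq> ?D2"
  define e where "e = \<bar>?D1 - ?D2\<bar> / 2"
  have e: "e > 0" using ne by (simp add: e_def)
  obtain r where r: "r > 0" "ball x r \<subseteq> U" using U open_contains_ball by blast
  obtain d1 where d1: "d1 > 0" "\<And>y. y \<in> U \<Longrightarrow> dist y x < d1 \<Longrightarrow> dist (pd j (pd i f) y) ?D1 < e"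
    using ci U(2) e unfolding continuous_on_iff by blast
  obtain d2 where d2: "d2 > 0" "\<And>y. y \<in> U \<Longrightarrow> dist y x < d2 \<Longrightarrow> dist (pd i (pd j f) y) ?D2 < e"
    using cj U(2) e unfolding continuous_on_iff by blast
  define t where "t = min r (min d1 d2) / 4"
  have t: "0 < t" "2 * t < r" and t3: "3 * t < r" "3 * t < d1" "3 * t < d2"
    using r d1 d2 by (auto simp: t_def)
  obtain \<xi> \<eta> where A: "0 < \<xi>" "\<xi> < t" "0 < \<eta>" "\<eta> < t"
     "f (x + t *\<^sub>R ?ei + t *\<^sub>R ?ej) - f (x + t *\<^sub>R ?ei) - f (x + t *\<^sub>R ?ej) + f x
      = t * t * pd j (pd i f) (x + \<xi> *\<^sub>R ?ei + \<eta> *\<^sub>R ?ej)"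
    using second_difference_mvt[OF r(2) t df dfi] by blast
  obtain \<xi>' \<eta>' where B: "0 < \<xi>'" "\<xi>' < t" "0 < \<eta>'" "\<eta>' < t"
     "f (x + t *\<^sub>R ?ej + t *\<^sub>R ?ei) - f (x + t *\<^sub>R ?ej) - f (x + t *\<^sub>R ?ei) + f x
      = t * t * pd i (pd j f) (x + \<xi>' *\<^sub>R ?ej + \<eta>' *\<^sub>R ?ei)"
    using second_difference_mvt[OF r(2) t df dfj] by blast
  have eq: "pd j (pd i f) (x + \<xi> *\<^sub>R ?ei + \<eta> *\<^sub>R ?ej) = pd i (pd j f) (x + \<xi>' *\<^sub>R ?ej + \<eta>' *\<^sub>R ?ei)"
    using A(5) B(5) t(1) by (simp add: algebra_simps)
  have p1: "x + \<xi> *\<^sub>R ?ei + \<eta> *\<^sub>R ?ej \<in> ball x (3 * t)"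
    using axis_steps_in_ball[of \<xi> t \<eta> "3 * t"] A t by auto
  have p2: "x + \<xi>' *\<^sub>R ?ej + \<eta>' *\<^sub>R ?ei \<in> ball x (3 * t)"
    using axis_steps_in_ball[of \<xi>' t \<eta>' "3 * t"] B t by auto
  have "dist (pd j (pd i f) (x + \<xi> *\<^sub>R ?ei + \<eta> *\<^sub>R ?ej)) ?D1 < e"
    using p1 t3 r(2) by (intro d1(2)) (auto simp: dist_commute subset_iff)
  moreover have "dist (pd i (pd j f) (x + \<xi>' *\<^sub>R ?ej + \<eta>' *\<^sub>R ?ei)) ?D2 < e"
    using p2 t3 r(2) by (intro d2(2)) (auto simp: dist_commute subset_iff)
  ultimately have "\<bar>?D1 - ?D2\<bar> < 2 * e" using eq by (simp add: dist_real_def)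
  then show False by (simp add: e_def)
qed

lemma sum_contract_assoc:
  "(\<Sum>b\<in>A. (\<Sum>f\<in>B. c f * d f b) * v b) = (\<Sum>f\<in>B. c f * (\<Sum>b\<in>A. d f b * (v b :: real)))"
  by (simp add: sum_distrib_left sum_distrib_right mult.assoc) (rule sum.swap)

lemma sum_mult_sum_commute:
  "(\<Sum>i\<in>A. f i * (\<Sum>j\<in>B. g j * h i j)) = (\<Sum>j\<in>B. g j * (\<Sum>i\<in>A. f i * (h i j :: real)))"
  by (simp add: sum_distrib_left mult.left_commute) (rule sum.swap)

lemma sum_kronecker_mult [simp]:
  fixes X :: "'a::finite \<Rightarrow> real"
  shows "(\<Sum>d\<in>UNIV. (if d = a then 1 else 0) * X d) = X a"
    and "(\<Sum>d\<in>UNIV. (if a = d then 1 else 0) * X d) = X a"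
    and "(\<Sum>d\<in>UNIV. X d * (if d = a then 1 else 0)) = X a"
    and "(\<Sum>d\<in>UNIV. X d * (if a = d then 1 else 0)) = X a"
  by (simp_all add: if_distrib[of "\<lambda>t. t * _"] if_distrib[of "\<lambda>t. _ * t"] cong: if_cong)

lemma sum_swap3: "(\<Sum>b\<in>A. \<Sum>d\<in>B. \<Sum>c\<in>C. X b d c) = (\<Sum>c\<in>C. \<Sum>d\<in>B. \<Sum>b\<in>A. X b d c)"
  by (subst sum.swap, subst (2) sum.swap, subst sum.swap) simp

lemma matrix_inv_mult:
  fixes A :: "real^'n::finite^'n"
  assumes "invertible A"
  shows "A ** matrix_inv A = mat 1" "matrix_inv A ** A = mat 1"
proof -
  have "\<exists>A'. A ** A' = mat 1 \<and> A' ** A = mat 1" using assms unfolding invertible_def by blast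
  then have "A ** matrix_inv A = mat 1 \<and> matrix_inv A ** A = mat 1"
    unfolding matrix_inv_def by (rule someI_ex)
  then show "A ** matrix_inv A = mat 1" "matrix_inv A ** A = mat 1" by auto
qed

lemma invertible_if_positive_definite:
  fixes A :: "real^'n::finite^'n"
  assumes "\<forall>v. v \<noteq> 0 \<longrightarrow> v \<bullet> (A *v v) > 0"
  shows "invertible A"
proof -
  have "\<forall>v. A *v v = 0 \<longrightarrow> v = 0"
    using assms by (metis inner_zero_right less_irrefl)
  then show ?thesis
    unfolding invertible_left_inverse matrix_left_invertible_ker by blast
qed

lemma symmetric_matrix_inv:
  fixes A :: "real^'n::finite^'n"
  assumes "transpose A = A" "invertible A"
  shows "transpose (matrix_inv A) = matrix_inv A"
proof -
  let ?B = "matrix_inv A"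
  have left: "transpose ?B ** A = mat 1"
    by (metis assms(1) matrix_transpose_mul matrix_inv_mult(1)[OF assms(2)] transpose_mat)
  have "transpose ?B = (transpose ?B ** A) ** ?B"
    by (metis matrix_mul_assoc matrix_mul_rid matrix_inv_mult(1)[OF assms(2)])
  then show ?thesis by (simp add: left matrix_mul_lid)
qed

lemma matrix_inv_entry_sum:
  fixes A :: "real^'n::finite^'n"
  assumes "invertible A"
  shows "(\<Sum>k\<in>UNIV. A $ i $ k * matrix_inv A $ k $ j) = (if i = j then 1 else 0)"
    and "(\<Sum>k\<in>UNIV. matrix_inv A $ i $ k * A $ k $ j) = (if i = j then 1 else 0)"
proof -
  have "(A ** matrix_inv A) $ i $ j = (if i = j then 1 else 0)"
    and "(matrix_inv A ** A) $ i $ j = (if i = j then 1 else 0)"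
    by (simp_all add: matrix_inv_mult[OF assms] mat_def)
  then show "(\<Sum>k\<in>UNIV. A $ i $ k * matrix_inv A $ k $ j) = (if i = j then 1 else 0)"
    and "(\<Sum>k\<in>UNIV. matrix_inv A $ i $ k * A $ k $ j) = (if i = j then 1 else 0)"
    by (simp_all add: matrix_matrix_mult_def)
qed

lemma matrix_inv_contract:
  fixes A :: "real^'n::finite^'n"
  assumes "invertible A"
  shows "(\<Sum>k\<in>UNIV. A $ i $ k * (\<Sum>h\<in>UNIV. matrix_inv A $ k $ h * X h)) = X i"
    and "(\<Sum>k\<in>UNIV. matrix_inv A $ i $ k * (\<Sum>h\<in>UNIV. A $ k $ h * X h)) = X i"
  by (simp_all add: sum_contract_assoc[symmetric] matrix_inv_entry_sum[OF assms])

lemma matrix_inv_cramer: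
  fixes A :: "real^'n::finite^'n"
  assumes "invertible A"
  shows "matrix_inv A $ k $ m = det (\<chi> i j. if j = k then axis m 1 $ i else A $ i $ j) / det A"
proof -
  let ?b = "axis m (1::real) :: real^'n"
  have "A *v (matrix_inv A *v ?b) = ?b"
    by (simp add: matrix_vector_mul_assoc matrix_inv_mult[OF assms])
  then have "matrix_inv A *v ?b = (\<chi> k. det (\<chi> i j. if j = k then ?b $ i else A $ i $ j) / det A)"
    using cramer assms invertible_det_nz by blast
  moreover have "(matrix_inv A *v ?b) $ k = matrix_inv A $ k $ m"
    by (simp add: matrix_vector_mult_def axis_def if_distrib cong: if_cong)
  ultimately show ?thesis by simp
qed

lemma differentiable_prod:
  fixes f :: "'i \<Rightarrow> 'a::real_normed_vector \<Rightarrow> real"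
  assumes "\<And>j. j \<in> A \<Longrightarrow> f j differentiable (at x)"
  shows "(\<lambda>y. \<Prod>j\<in>A. f j y) differentiable (at x)"
proof -
  obtain D where "\<And>j. j \<in> A \<Longrightarrow> (f j has_derivative D j) (at x)"
    using assms unfolding differentiable_def by metis
  then show ?thesis unfolding differentiable_def using has_derivative_prod by blast
qed

lemma differentiable_det:
  fixes M :: "'a::real_normed_vector \<Rightarrow> real^'n::finite^'n"
  assumes "\<And>i j. (\<lambda>y. M y $ i $ j) differentiable (at x)"
  shows "(\<lambda>y. det (M y)) differentiable (at x)"
  unfolding det_def
  by (intro differentiable_sum ballI differentiable_mult differentiable_const differentiable_prod assms)
    (simp add: finite_permutations)

lemma differentiable_matrix_inv_entry:
  fixes G :: "'a::real_normed_vector \<Rightarrow> real^'n::finite^'n"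
  assumes U: "open U" "x \<in> U" and inv: "\<And>y. y \<in> U \<Longrightarrow> invertible (G y)"
    and d: "\<And>i j. (\<lambda>y. G y $ i $ j) differentiable (at x)"
  shows "(\<lambda>y. matrix_inv (G y) $ k $ m) differentiable (at x)"
proof -
  have cols: "(\<lambda>y. (\<chi> i j. if j = k then axis m 1 $ i else G y $ i $ j) $ i $ j) differentiable (at x)" for i j
    using d by (cases "j = k") simp_all
  have "det (G x) \<noteq> 0"
    using inv[OF U(2)] invertible_det_nz by blast
  then have "(\<lambda>y. det (\<chi> i j. if j = k then axis m 1 $ i else G y $ i $ j) / det (G y)) differentiable (at x)"
    by (intro differentiable_divide differentiable_det cols d)
  then obtain D where "((\<lambda>y. det (\<chi> i j. if j = k then axis m 1 $ i else G y $ i $ j) / det (G y))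
      has_derivative D) (at x)"
    unfolding differentiable_def by blast
  then have "((\<lambda>y. matrix_inv (G y) $ k $ m) has_derivative D) (at x)"
    by (rule has_derivative_transform_within_open[OF _ U]) (simp add: matrix_inv_cramer[OF inv])
  then show ?thesis unfolding differentiable_def by blast
qed

lemma symmetric_antisymmetric_eq_0:
  fixes C :: "'k \<Rightarrow> 'k \<Rightarrow> 'k \<Rightarrow> real"
  assumes sym: "\<And>a b c. C a b c = C b a c" and anti: "\<And>a b c. C a b c = - C a c b"
  shows "C a b c = 0"
proof -
  have "C a b c = - C a c b" by (rule anti)
  also have "\<dots> = - C c a b" by (simp add: sym)
  also have "\<dots> = C c b a" by (simp add: anti[of c a b])
  also have "\<dots> = C b c a" by (simp add: sym)
  also have "\<dots> = - C b a c" by (simp add: anti[of b c a])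
  also have "\<dots> = - C a b c" by (simp add: sym)
  finally show ?thesis by simp
qed

text \<open>The paper's \<open>gbar\<^sup>d\<^sub>a\<close> when \<open>\<nu>\<close> and \<open>n\<close> are the raised and lowered normal frame.\<close>
definition tangent_proj :: "('k::finite \<Rightarrow> 'd \<Rightarrow> real) \<Rightarrow> ('k \<Rightarrow> 'd \<Rightarrow> real) \<Rightarrow> 'd \<Rightarrow> 'd \<Rightarrow> real" where
  "tangent_proj \<nu> n d a = (if d = a then 1 else 0) - (\<Sum>\<gamma>\<in>UNIV. \<nu> \<gamma> d * n \<gamma> a)"

text \<open>Pointwise model at a point of \<open>\<Lambda>\<close>: \<open>H \<beta> a b\<close> stands for \<open>\<nabla>\<^sub>a n\<^sub>b\<^sub>\<beta>\<close> and \<open>\<nu> \<alpha> b\<close> for \<open>n\<^sup>b\<^sub>\<alpha>\<close>.\<close>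
locale normal_hessian =
  fixes H :: "'k::finite \<Rightarrow> 'd::finite \<Rightarrow> 'd \<Rightarrow> real" and \<nu> :: "'k \<Rightarrow> 'd \<Rightarrow> real"
  assumes H_sym: "H \<beta> a b = H \<beta> b a"
    and contract_antisym: "(\<Sum>b\<in>UNIV. \<nu> \<alpha> b * H \<beta> a b) = - (\<Sum>b\<in>UNIV. \<nu> \<beta> b * H \<alpha> a b)"
begin

lemma normal_block_eq_0: "(\<Sum>d\<in>UNIV. \<Sum>b\<in>UNIV. \<nu> \<gamma> d * \<nu> \<alpha> b * H \<beta> d b) = 0"
proof -
  define C where "C \<gamma> \<alpha> \<beta> = (\<Sum>d\<in>UNIV. \<Sum>b\<in>UNIV. \<nu> \<gamma> d * \<nu> \<alpha> b * H \<beta> d b)" for \<gamma> \<alpha> \<beta>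
  have "C \<gamma> \<alpha> \<beta> = C \<alpha> \<gamma> \<beta>" for \<gamma> \<alpha> \<beta>
    unfolding C_def by (subst sum.swap) (simp add: H_sym[of \<beta>] mult_ac)
  moreover have "C \<gamma> \<alpha> \<beta> = - C \<gamma> \<beta> \<alpha>" for \<gamma> \<alpha> \<beta>
  proof -
    have "C \<gamma> \<alpha> \<beta> = (\<Sum>d\<in>UNIV. \<nu> \<gamma> d * (\<Sum>b\<in>UNIV. \<nu> \<alpha> b * H \<beta> d b))"
      unfolding C_def by (simp add: sum_distrib_left mult.assoc)
    also have "\<dots> = - C \<gamma> \<beta> \<alpha>"
      unfolding C_def contract_antisym[of \<alpha>] by (simp add: sum_distrib_left mult.assoc sum_negf)
    finally show ?thesis .
  qed
  ultimately have "C \<gamma> \<alpha> \<beta> = 0"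
    using symmetric_antisymmetric_eq_0[of C] by blast
  then show ?thesis unfolding C_def .
qed

lemma contract_tangent_proj:
  "(\<Sum>b\<in>UNIV. \<nu> \<alpha> b * (\<Sum>d\<in>UNIV. tangent_proj \<nu> n d a * H \<beta> d b)) = (\<Sum>b\<in>UNIV. \<nu> \<alpha> b * H \<beta> a b)"
proof -
  have "(\<Sum>b\<in>UNIV. \<nu> \<alpha> b * (\<Sum>d\<in>UNIV. (\<Sum>\<gamma>\<in>UNIV. \<nu> \<gamma> d * n \<gamma> a) * H \<beta> d b))
      = (\<Sum>b\<in>UNIV. \<Sum>d\<in>UNIV. \<Sum>\<gamma>\<in>UNIV. n \<gamma> a * (\<nu> \<gamma> d * \<nu> \<alpha> b * H \<beta> d b))"
    by (simp add: sum_distrib_left sum_distrib_right mult.assoc mult.left_commute)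
  also have "\<dots> = (\<Sum>\<gamma>\<in>UNIV. \<Sum>d\<in>UNIV. \<Sum>b\<in>UNIV. n \<gamma> a * (\<nu> \<gamma> d * \<nu> \<alpha> b * H \<beta> d b))"
    by (rule sum_swap3)
  also have "\<dots> = (\<Sum>\<gamma>\<in>UNIV. n \<gamma> a * (\<Sum>d\<in>UNIV. \<Sum>b\<in>UNIV. \<nu> \<gamma> d * \<nu> \<alpha> b * H \<beta> d b))"
    by (simp add: sum_distrib_left)
  also have "\<dots> = 0" by (simp add: normal_block_eq_0)
  finally have "(\<Sum>b\<in>UNIV. \<nu> \<alpha> b * (\<Sum>d\<in>UNIV. (\<Sum>\<gamma>\<in>UNIV. \<nu> \<gamma> d * n \<gamma> a) * H \<beta> d b)) = 0" .
  then show ?thesis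
    unfolding tangent_proj_def left_diff_distrib sum_subtractf right_diff_distrib by simp
qed

lemma tangent_normal_decomposition:
  fixes n :: "'k \<Rightarrow> 'd \<Rightarrow> real" and gm gi :: "'d \<Rightarrow> 'd \<Rightarrow> real"
  assumes \<nu>_eq: "\<And>\<alpha> a. \<nu> \<alpha> a = (\<Sum>b\<in>UNIV. gi a b * n \<alpha> b)"
    and gi_sym: "\<And>a b. gi a b = gi b a"
    and gm_gi: "\<And>b h. (\<Sum>c\<in>UNIV. gm b c * gi c h) = (if b = h then 1 else 0)"
  shows "H \<beta> a b =
     (\<Sum>c\<in>UNIV. (gm b c - (\<Sum>\<alpha>\<in>UNIV. n \<alpha> b * n \<alpha> c)) *
        (\<Sum>d\<in>UNIV. tangent_proj \<nu> n d a * (\<Sum>h\<in>UNIV. gi c h * H \<beta> d h)))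
   + (\<Sum>\<alpha>\<in>UNIV. n \<alpha> b * (\<Sum>e\<in>UNIV. \<nu> \<alpha> e * (\<Sum>d\<in>UNIV. tangent_proj \<nu> n d a * H \<beta> d e)))
   + (\<Sum>\<alpha>\<in>UNIV. n \<alpha> a * (\<Sum>e\<in>UNIV. \<nu> \<alpha> e * (\<Sum>d\<in>UNIV. tangent_proj \<nu> n d b * H \<beta> d e)))"
proof -
  define N where "N a' \<alpha> = (\<Sum>e\<in>UNIV. \<nu> \<alpha> e * H \<beta> a' e)" for a' \<alpha>
  define K where "K h = (\<Sum>d\<in>UNIV. tangent_proj \<nu> n d a * H \<beta> d h)" for h
  have normal_part: "(\<Sum>c\<in>UNIV. (\<Sum>\<alpha>\<in>UNIV. n \<alpha> b * n \<alpha> c) * gi c h) = (\<Sum>\<alpha>\<in>UNIV. n \<alpha> b * \<nu> \<alpha> h)" for h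
    unfolding \<nu>_eq sum_contract_assoc by (simp add: gi_sym[of h] mult.commute)
  have lower_raise: "(\<Sum>c\<in>UNIV. (gm b c - (\<Sum>\<alpha>\<in>UNIV. n \<alpha> b * n \<alpha> c)) * gi c h)
      = (if b = h then 1 else 0) - (\<Sum>\<alpha>\<in>UNIV. n \<alpha> b * \<nu> \<alpha> h)" for h
    by (simp add: left_diff_distrib sum_subtractf gm_gi normal_part)
  have "(\<Sum>c\<in>UNIV. (gm b c - (\<Sum>\<alpha>\<in>UNIV. n \<alpha> b * n \<alpha> c)) *
        (\<Sum>d\<in>UNIV. tangent_proj \<nu> n d a * (\<Sum>h\<in>UNIV. gi c h * H \<beta> d h)))
      = (\<Sum>c\<in>UNIV. (gm b c - (\<Sum>\<alpha>\<in>UNIV. n \<alpha> b * n \<alpha> c)) * (\<Sum>h\<in>UNIV. gi c h * K h))"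
    unfolding K_def sum_mult_sum_commute[of "\<lambda>d. tangent_proj \<nu> n d a"] ..
  also have "\<dots> = (\<Sum>h\<in>UNIV. (\<Sum>c\<in>UNIV. (gm b c - (\<Sum>\<alpha>\<in>UNIV. n \<alpha> b * n \<alpha> c)) * gi c h) * K h)"
    by (rule sum_contract_assoc[symmetric])
  also have "\<dots> = (\<Sum>h\<in>UNIV. ((if b = h then 1 else 0) - (\<Sum>\<alpha>\<in>UNIV. n \<alpha> b * \<nu> \<alpha> h)) * K h)"
    by (simp only: lower_raise)
  also have "\<dots> = K b - (\<Sum>h\<in>UNIV. (\<Sum>\<alpha>\<in>UNIV. n \<alpha> b * \<nu> \<alpha> h) * K h)"
    by (simp add: left_diff_distrib sum_subtractf)
  also have "\<dots> = K b - (\<Sum>\<alpha>\<in>UNIV. n \<alpha> b * N a \<alpha>)"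
    unfolding sum_contract_assoc K_def N_def contract_tangent_proj ..
  also have "K b = H \<beta> a b - (\<Sum>\<gamma>\<in>UNIV. n \<gamma> a * N b \<gamma>)"
  proof -
    have "(\<Sum>d\<in>UNIV. (\<Sum>\<gamma>\<in>UNIV. \<nu> \<gamma> d * n \<gamma> a) * H \<beta> d b)
        = (\<Sum>d\<in>UNIV. (\<Sum>\<gamma>\<in>UNIV. n \<gamma> a * \<nu> \<gamma> d) * H \<beta> d b)"
      by (simp add: mult.commute)
    also have "\<dots> = (\<Sum>\<gamma>\<in>UNIV. n \<gamma> a * N b \<gamma>)"
      unfolding sum_contract_assoc N_def by (simp only: H_sym[of \<beta> b])
    finally show ?thesis
      unfolding K_def tangent_proj_def by (simp add: left_diff_distrib sum_subtractf)
  qed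
  finally show ?thesis
    unfolding N_def contract_tangent_proj by simp
qed

lemma contract_bracket:
  fixes n :: "'k \<Rightarrow> 'd \<Rightarrow> real" and gi :: "'d \<Rightarrow> 'd \<Rightarrow> real" and Gm :: "'d \<Rightarrow> 'd \<Rightarrow> 'd \<Rightarrow> real"
  assumes Gm_sym: "\<And>c a e. Gm c a e = Gm c e a"
  shows "(\<Sum>b\<in>UNIV. \<nu> \<alpha> b * ((\<Sum>h\<in>UNIV. gi a h * H \<beta> b h) - (\<Sum>e\<in>UNIV. Gm a b e * \<nu> \<beta> e))
              - \<nu> \<beta> b * ((\<Sum>h\<in>UNIV. gi a h * H \<alpha> b h) - (\<Sum>e\<in>UNIV. Gm a b e * \<nu> \<alpha> e)))
    = 2 * (\<Sum>b\<in>UNIV. gi a b * (\<Sum>e\<in>UNIV. \<nu> \<alpha> e * (\<Sum>d\<in>UNIV. tangent_proj \<nu> n d b * H \<beta> d e)))"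
proof -
  define N where "N h \<alpha>' \<beta>' = (\<Sum>b\<in>UNIV. \<nu> \<alpha>' b * H \<beta>' h b)" for h \<alpha>' \<beta>'
  have raise: "(\<Sum>b\<in>UNIV. \<nu> \<alpha>' b * (\<Sum>h\<in>UNIV. gi a h * H \<beta>' b h)) = (\<Sum>h\<in>UNIV. gi a h * N h \<alpha>' \<beta>')"
    for \<alpha>' \<beta>'
    unfolding N_def sum_mult_sum_commute[of "\<nu> \<alpha>'"] by (simp only: H_sym[of \<beta>'])
  have torsion_free: "(\<Sum>b\<in>UNIV. \<nu> \<beta> b * (\<Sum>e\<in>UNIV. Gm a b e * \<nu> \<alpha> e))
      = (\<Sum>b\<in>UNIV. \<nu> \<alpha> b * (\<Sum>e\<in>UNIV. Gm a b e * \<nu> \<beta> e))"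
  proof -
    have "(\<Sum>b\<in>UNIV. \<nu> \<beta> b * (\<Sum>e\<in>UNIV. Gm a b e * \<nu> \<alpha> e))
        = (\<Sum>b\<in>UNIV. \<nu> \<beta> b * (\<Sum>e\<in>UNIV. \<nu> \<alpha> e * Gm a b e))"
      by (simp add: mult.commute)
    also have "\<dots> = (\<Sum>e\<in>UNIV. \<nu> \<alpha> e * (\<Sum>b\<in>UNIV. \<nu> \<beta> b * Gm a b e))"
      by (rule sum_mult_sum_commute)
    also have "\<dots> = (\<Sum>b\<in>UNIV. \<nu> \<alpha> b * (\<Sum>e\<in>UNIV. Gm a b e * \<nu> \<beta> e))"
      by (simp add: Gm_sym[of a] mult.commute)
    finally show ?thesis .
  qed
  have "N h \<beta> \<alpha> = - N h \<alpha> \<beta>" for h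
    unfolding N_def by (rule contract_antisym)
  then have "(\<Sum>b\<in>UNIV. \<nu> \<alpha> b * ((\<Sum>h\<in>UNIV. gi a h * H \<beta> b h) - (\<Sum>e\<in>UNIV. Gm a b e * \<nu> \<beta> e))
              - \<nu> \<beta> b * ((\<Sum>h\<in>UNIV. gi a h * H \<alpha> b h) - (\<Sum>e\<in>UNIV. Gm a b e * \<nu> \<alpha> e)))
      = 2 * (\<Sum>h\<in>UNIV. gi a h * N h \<alpha> \<beta>)"
    using raise[of \<alpha> \<beta>] raise[of \<beta> \<alpha>] torsion_free
    by (simp add: right_diff_distrib sum_subtractf sum_negf)
  then show ?thesis
    unfolding N_def contract_tangent_proj .
qed

end

lemma smooth_on_pd: "smooth_on U f \<Longrightarrow> smooth_on U (pd i f)"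
  unfolding smooth_on_def by (metis Ck.simps(2))

lemma smooth_on_continuous_on: "smooth_on U f \<Longrightarrow> continuous_on U f"
  unfolding smooth_on_def by (metis Ck.simps(1))

lemma smooth_on_differentiable:
  "smooth_on U f \<Longrightarrow> open U \<Longrightarrow> y \<in> U \<Longrightarrow> f differentiable (at y)"
  unfolding smooth_on_def by (metis Ck.simps(2) differentiable_on_eq_differentiable_at)

context
  fixes U :: "(real^'d::finite) set" and g :: "real^'d \<Rightarrow> real^'d^'d"
  assumes RM: "riemannian_metric U g"
begin

lemma metric_open: "open U"
  using RM unfolding riemannian_metric_def by blast

lemma metric_invertible: "y \<in> U \<Longrightarrow> invertible (g y)"
  using RM unfolding riemannian_metric_def by (blast intro: invertible_if_positive_definite)

lemma metric_transpose: "y \<in> U \<Longrightarrow> transpose (g y) = g y"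
  using RM unfolding riemannian_metric_def by blast

lemma metric_symmetric: "y \<in> U \<Longrightarrow> g y $ a $ b = g y $ b $ a"
  using arg_cong[where f = "\<lambda>M. M $ b $ a", OF metric_transpose] by (simp add: transpose_def)

lemma ginv_symmetric: "y \<in> U \<Longrightarrow> ginv g y a b = ginv g y b a"
  using arg_cong[where f = "\<lambda>M. M $ b $ a", OF symmetric_matrix_inv[OF metric_transpose metric_invertible]]
  by (simp add: transpose_def ginv_def)

lemma metric_ginv_contract: "y \<in> U \<Longrightarrow> (\<Sum>c\<in>UNIV. g y $ b $ c * ginv g y c h) = (if b = h then 1 else 0)"
  unfolding ginv_def by (rule matrix_inv_entry_sum(1)[OF metric_invertible])

lemma metric_differentiable: "y \<in> U \<Longrightarrow> (\<lambda>y. g y $ a $ b) differentiable (at y)"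
  using RM metric_open unfolding riemannian_metric_def by (blast intro: smooth_on_differentiable)

lemma ginv_differentiable: "y \<in> U \<Longrightarrow> (\<lambda>y. ginv g y a b) differentiable (at y)"
  unfolding ginv_def
  by (rule differentiable_matrix_inv_entry[OF metric_open _ metric_invertible metric_differentiable])

lemma pd_metric_symmetric: "x \<in> U \<Longrightarrow> pd c (\<lambda>y. g y $ a $ b) x = pd c (\<lambda>y. g y $ b $ a) x"
  by (rule pd_cong_open[OF metric_differentiable metric_open]) (auto intro: metric_symmetric)

lemma Gamma_symmetric: "x \<in> U \<Longrightarrow> Gamma g c a b x = Gamma g c b a x"
  unfolding Gamma_def by (simp add: pd_metric_symmetric[of _ _ a b] add.commute)

lemma metric_Gamma_contract:
  assumes "x \<in> U"
  shows "(\<Sum>k\<in>UNIV. g x $ e $ k * Gamma g k a f x) =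
    (pd a (\<lambda>y. g y $ e $ f) x + pd f (\<lambda>y. g y $ e $ a) x - pd e (\<lambda>y. g y $ a $ f) x) / 2"
proof -
  have "(\<Sum>k\<in>UNIV. g x $ e $ k * Gamma g k a f x) = (\<Sum>k\<in>UNIV. g x $ e $ k *
     (\<Sum>h\<in>UNIV. matrix_inv (g x) $ k $ h * (pd a (\<lambda>y. g y $ h $ f) x + pd f (\<lambda>y. g y $ h $ a) x
        - pd h (\<lambda>y. g y $ a $ f) x))) / 2"
    unfolding Gamma_def ginv_def by (simp add: sum_distrib_left sum_divide_distrib mult.left_commute)
  then show ?thesis
    by (simp only: matrix_inv_contract(1)[OF metric_invertible[OF assms]])
qed

lemma metric_compatible:
  "x \<in> U \<Longrightarrow> pd a (\<lambda>y. g y $ e $ f) x =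
     (\<Sum>k\<in>UNIV. g x $ e $ k * Gamma g k a f x) + (\<Sum>k\<in>UNIV. g x $ f $ k * Gamma g k a e x)"
  unfolding metric_Gamma_contract
  using pd_metric_symmetric[of x a e f] pd_metric_symmetric[of x e a f] pd_metric_symmetric[of x f a e]
  by (simp add: field_simps)

text \<open>Differentiating \<open>g\<^sub>c\<^sub>e g\<^sup>e\<^sup>b = \<delta>\<^sub>c\<^sup>b\<close>.\<close>
lemma pd_ginv:
  assumes x: "x \<in> U"
  shows "pd a (\<lambda>y. ginv g y c b) x =
    - (\<Sum>e\<in>UNIV. ginv g x c e * (\<Sum>f\<in>UNIV. pd a (\<lambda>y. g y $ e $ f) x * ginv g x f b))"
proof -
  have lowered: "(\<Sum>e\<in>UNIV. g x $ c' $ e * pd a (\<lambda>y. ginv g y e b) x) =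
      - (\<Sum>e\<in>UNIV. pd a (\<lambda>y. g y $ c' $ e) x * ginv g x e b)" for c'
  proof -
    have dif: "(\<lambda>y. \<Sum>e\<in>UNIV. g y $ c' $ e * ginv g y e b) differentiable (at x)"
      by (intro differentiable_sum ballI differentiable_mult metric_differentiable[OF x] ginv_differentiable[OF x]) simp
    have "pd a (\<lambda>y. \<Sum>e\<in>UNIV. g y $ c' $ e * ginv g y e b) x = pd a (\<lambda>y. if c' = b then 1 else 0) x"
      by (rule pd_cong_open[OF dif metric_open x metric_ginv_contract])
    moreover have "pd a (\<lambda>y. \<Sum>e\<in>UNIV. g y $ c' $ e * ginv g y e b) x =
       (\<Sum>e\<in>UNIV. pd a (\<lambda>y. g y $ c' $ e) x * ginv g x e b + g x $ c' $ e * pd a (\<lambda>y. ginv g y e b) x)"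
      using x by (simp add: pd_sum pd_mult metric_differentiable ginv_differentiable)
    ultimately show ?thesis
      by (simp add: pd_const sum.distrib eq_neg_iff_add_eq_0 add.commute)
  qed
  have "pd a (\<lambda>y. ginv g y c b) x
      = (\<Sum>c'\<in>UNIV. ginv g x c c' * (\<Sum>e\<in>UNIV. g x $ c' $ e * pd a (\<lambda>y. ginv g y e b) x))"
    unfolding ginv_def[of g x] by (simp only: matrix_inv_contract(2)[OF metric_invertible[OF x]])
  then show ?thesis
    by (simp add: lowered sum_negf)
qed

lemma pd_ginv_Gamma:
  assumes x: "x \<in> U"
  shows "pd a (\<lambda>y. ginv g y c b) x =
    - (\<Sum>e\<in>UNIV. Gamma g c a e x * ginv g x e b) - (\<Sum>e\<in>UNIV. ginv g x c e * Gamma g b a e x)"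
proof -
  have "(\<Sum>f\<in>UNIV. pd a (\<lambda>y. g y $ e $ f) x * ginv g x f b)
      = (\<Sum>k\<in>UNIV. g x $ e $ k * (\<Sum>f\<in>UNIV. Gamma g k a f x * ginv g x f b)) + Gamma g b a e x" for e
  proof -
    have "(\<Sum>f\<in>UNIV. pd a (\<lambda>y. g y $ e $ f) x * ginv g x f b)
        = (\<Sum>f\<in>UNIV. (\<Sum>k\<in>UNIV. g x $ e $ k * Gamma g k a f x) * ginv g x f b)
          + (\<Sum>f\<in>UNIV. (\<Sum>k\<in>UNIV. Gamma g k a e x * g x $ k $ f) * ginv g x f b)"
      using x by (simp add: metric_compatible distrib_left distrib_right sum.distrib metric_symmetric[OF x] mult.commute)
    also have "\<dots> = (\<Sum>k\<in>UNIV. g x $ e $ k * (\<Sum>f\<in>UNIV. Gamma g k a f x * ginv g x f b))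
          + (\<Sum>k\<in>UNIV. Gamma g k a e x * (\<Sum>f\<in>UNIV. g x $ k $ f * ginv g x f b))"
      by (simp only: sum_contract_assoc)
    finally show ?thesis
      using x by (simp add: metric_ginv_contract)
  qed
  then show ?thesis
    using x by (simp add: pd_ginv distrib_left sum.distrib matrix_inv_contract(2)[OF metric_invertible, folded ginv_def])
qed

end

lemma pd_gram_eq_0:
  fixes U :: "(real^'d::finite) set" and s :: "'k::finite \<Rightarrow> real^'d \<Rightarrow> real"
  assumes GD: "gram_delta_Os2 U g s" and U: "open U" "x \<in> U"
    and s_diff: "\<And>\<gamma>. s \<gamma> differentiable (at x)" and s0: "\<And>\<gamma>. s \<gamma> x = 0"
  shows "pd a (gram g s \<alpha> \<beta>) x = 0"
proof -
  obtain T :: "'k \<Rightarrow> 'k \<Rightarrow> 'k \<Rightarrow> 'k \<Rightarrow> real^'d \<Rightarrow> real" where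
    T_smooth: "\<And>\<gamma> \<delta> \<alpha> \<beta>. smooth_on U (T \<gamma> \<delta> \<alpha> \<beta>)" and
    gram_eq: "\<And>y \<alpha> \<beta>. y \<in> U \<Longrightarrow> gram g s \<alpha> \<beta> y = (if \<alpha> = \<beta> then 1 else 0) +
        (\<Sum>\<gamma>\<in>UNIV. \<Sum>\<delta>\<in>UNIV. s \<gamma> y * s \<delta> y * T \<gamma> \<delta> \<alpha> \<beta> y)"
    using GD unfolding gram_delta_Os2_def by blast
  have T_diff: "T \<gamma> \<delta> \<alpha> \<beta> differentiable (at x)" for \<gamma> \<delta>
    using smooth_on_differentiable[OF T_smooth U] .
  let ?Q = "\<lambda>y. \<Sum>\<gamma>\<in>UNIV. \<Sum>\<delta>\<in>UNIV. s \<gamma> y * s \<delta> y * T \<gamma> \<delta> \<alpha> \<beta> y"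
  have Q_diff: "?Q differentiable (at x)"
    by (intro differentiable_sum ballI differentiable_mult s_diff T_diff) simp_all
  have "pd a (gram g s \<alpha> \<beta>) x = pd a (\<lambda>y. (if \<alpha> = \<beta> then 1 else 0) + ?Q y) x"
    using Q_diff U gram_eq by (intro pd_cong_open[symmetric]) auto
  also have "\<dots> = pd a ?Q x"
    using Q_diff by (simp add: pd_add pd_const)
  also have "\<dots> = (\<Sum>\<gamma>\<in>UNIV. \<Sum>\<delta>\<in>UNIV. pd a (\<lambda>y. s \<gamma> y * s \<delta> y * T \<gamma> \<delta> \<alpha> \<beta> y) x)"
    by (simp add: pd_sum s_diff T_diff)
  also have "\<dots> = 0"
    by (simp add: pd_mult s_diff T_diff s0)
  finally show ?thesis .
qed

context
  fixes U :: "(real^'d::finite) set" and g :: "real^'d \<Rightarrow> real^'d^'d"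
    and s :: "'k::finite \<Rightarrow> real^'d \<Rightarrow> real"
  assumes RM: "riemannian_metric U g" and s_smooth: "\<And>\<alpha>. smooth_on U (s \<alpha>)"
begin

lemma nlow_eq_pd: "nlow s \<alpha> b = pd b (s \<alpha>)"
  by (rule ext) (simp add: nlow_def)

lemma nup_eq: "nup g s \<alpha> c = (\<lambda>y. \<Sum>b\<in>UNIV. ginv g y c b * nlow s \<alpha> b y)"
  by (rule ext) (simp add: nup_def)

lemma s_differentiable: "y \<in> U \<Longrightarrow> s \<alpha> differentiable (at y)"
  by (rule smooth_on_differentiable[OF s_smooth metric_open[OF RM]])

lemma nlow_differentiable: "y \<in> U \<Longrightarrow> nlow s \<alpha> b differentiable (at y)"
  unfolding nlow_eq_pd by (rule smooth_on_differentiable[OF smooth_on_pd[OF s_smooth] metric_open[OF RM]])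

lemma nup_differentiable: "x \<in> U \<Longrightarrow> nup g s \<alpha> c differentiable (at x)"
  unfolding nup_eq
  by (intro differentiable_sum ballI differentiable_mult ginv_differentiable[OF RM] nlow_differentiable) simp_all

lemma hessian_symmetric:
  assumes x: "x \<in> U"
  shows "cov_form g (nlow s \<beta>) a b x = cov_form g (nlow s \<beta>) b a x"
proof -
  have "pd a (nlow s \<beta> b) x = pd b (nlow s \<beta> a) x"
    unfolding nlow_eq_pd
    using nlow_differentiable[unfolded nlow_eq_pd]
      smooth_on_continuous_on[OF smooth_on_pd[OF smooth_on_pd[OF s_smooth]]]
    by (intro pd_pd_commute[OF metric_open[OF RM] x s_differentiable])
  then show ?thesis
    unfolding cov_form_def using Gamma_symmetric[OF RM x] by simp
qed

text \<open>Covariant differentiation commutes with raising the index: \<open>\<nabla>\<^sub>a n\<^sup>c = g\<^sup>c\<^sup>h \<nabla>\<^sub>a n\<^sub>h\<close>.\<close>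
lemma pd_nup:
  assumes x: "x \<in> U"
  shows "pd a (nup g s \<alpha> c) x =
    (\<Sum>h\<in>UNIV. ginv g x c h * cov_form g (nlow s \<alpha>) a h x) - (\<Sum>e\<in>UNIV. Gamma g c a e x * nup g s \<alpha> e x)"
proof -
  have "pd a (nup g s \<alpha> c) x
      = (\<Sum>b\<in>UNIV. pd a (\<lambda>y. ginv g y c b) x * nlow s \<alpha> b x) + (\<Sum>b\<in>UNIV. ginv g x c b * pd a (nlow s \<alpha> b) x)"
    unfolding nup_eq
    by (simp add: pd_sum pd_mult ginv_differentiable[OF RM x] nlow_differentiable[OF x] sum.distrib)
  also have "(\<Sum>b\<in>UNIV. pd a (\<lambda>y. ginv g y c b) x * nlow s \<alpha> b x)
      = - (\<Sum>e\<in>UNIV. Gamma g c a e x * nup g s \<alpha> e x)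
        - (\<Sum>e\<in>UNIV. ginv g x c e * (\<Sum>b\<in>UNIV. Gamma g b a e x * nlow s \<alpha> b x))"
  proof -
    have "(\<Sum>b\<in>UNIV. (\<Sum>e\<in>UNIV. Gamma g c a e x * ginv g x e b) * nlow s \<alpha> b x)
        = (\<Sum>e\<in>UNIV. Gamma g c a e x * nup g s \<alpha> e x)"
      unfolding sum_contract_assoc nup_def ..
    moreover have "(\<Sum>b\<in>UNIV. (\<Sum>e\<in>UNIV. ginv g x c e * Gamma g b a e x) * nlow s \<alpha> b x)
        = (\<Sum>e\<in>UNIV. ginv g x c e * (\<Sum>b\<in>UNIV. Gamma g b a e x * nlow s \<alpha> b x))"
      by (rule sum_contract_assoc)
    ultimately show ?thesis
      by (simp add: pd_ginv_Gamma[OF RM x] left_diff_distrib sum_subtractf sum_negf)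
  qed
  finally show ?thesis
    by (simp add: cov_form_def right_diff_distrib sum_subtractf)
qed

lemma cov_vec_nup:
  "x \<in> U \<Longrightarrow> cov_vec g (nup g s \<beta>) d c x = (\<Sum>h\<in>UNIV. ginv g x c h * cov_form g (nlow s \<beta>) d h x)"
  unfolding cov_vec_def by (simp add: pd_nup)

lemma gram_eq_contract:
  "y \<in> U \<Longrightarrow> gram g s \<alpha> \<beta> y = (\<Sum>c\<in>UNIV. nup g s \<alpha> c y * nlow s \<beta> c y)"
  unfolding gram_def nup_def sum_distrib_right
  by (subst sum.swap) (simp add: ginv_symmetric[OF RM] mult.commute mult.left_commute)

lemma pd_gram:
  assumes x: "x \<in> U"
  shows "pd a (gram g s \<alpha> \<beta>) x =
    (\<Sum>h\<in>UNIV. cov_form g (nlow s \<alpha>) a h x * nup g s \<beta> h x)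
    + (\<Sum>e\<in>UNIV. nup g s \<alpha> e x * cov_form g (nlow s \<beta>) a e x)"
proof -
  have diff: "(\<lambda>y. \<Sum>c\<in>UNIV. nup g s \<alpha> c y * nlow s \<beta> c y) differentiable (at x)"
    by (intro differentiable_sum ballI differentiable_mult nup_differentiable nlow_differentiable x) simp
  have "pd a (gram g s \<alpha> \<beta>) x = pd a (\<lambda>y. \<Sum>c\<in>UNIV. nup g s \<alpha> c y * nlow s \<beta> c y) x"
    using diff metric_open[OF RM] x gram_eq_contract by (intro pd_cong_open[symmetric]) auto
  also have "\<dots> = (\<Sum>c\<in>UNIV. pd a (nup g s \<alpha> c) x * nlow s \<beta> c x)
      + (\<Sum>c\<in>UNIV. nup g s \<alpha> c x * pd a (nlow s \<beta> c) x)"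
    by (simp add: pd_sum pd_mult nup_differentiable nlow_differentiable x sum.distrib)
  also have "(\<Sum>c\<in>UNIV. pd a (nup g s \<alpha> c) x * nlow s \<beta> c x)
      = (\<Sum>h\<in>UNIV. cov_form g (nlow s \<alpha>) a h x * nup g s \<beta> h x)
        - (\<Sum>e\<in>UNIV. nup g s \<alpha> e x * (\<Sum>c\<in>UNIV. Gamma g c a e x * nlow s \<beta> c x))"
  proof -
    have "(\<Sum>c\<in>UNIV. (\<Sum>h\<in>UNIV. ginv g x c h * cov_form g (nlow s \<alpha>) a h x) * nlow s \<beta> c x)
        = (\<Sum>h\<in>UNIV. cov_form g (nlow s \<alpha>) a h x * nup g s \<beta> h x)"
      unfolding nup_def sum_contract_assoc[symmetric]
      by (simp add: ginv_symmetric[OF RM x] mult.commute)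
    moreover have "(\<Sum>c\<in>UNIV. (\<Sum>e\<in>UNIV. Gamma g c a e x * nup g s \<alpha> e x) * nlow s \<beta> c x)
        = (\<Sum>e\<in>UNIV. nup g s \<alpha> e x * (\<Sum>c\<in>UNIV. Gamma g c a e x * nlow s \<beta> c x))"
      by (simp only: mult.commute[of "Gamma g _ a _ x"] sum_contract_assoc)
    ultimately show ?thesis
      by (simp add: pd_nup x left_diff_distrib sum_subtractf)
  qed
  finally show ?thesis
    by (simp add: cov_form_def right_diff_distrib sum_subtractf)
qed

lemma normal_hessian_on_zero_set:
  assumes GD: "gram_delta_Os2 U g s" and x: "x \<in> U" and s0: "\<And>\<gamma>. s \<gamma> x = 0"
  shows "normal_hessian (\<lambda>\<beta> a b. cov_form g (nlow s \<beta>) a b x) (\<lambda>\<alpha> b. nup g s \<alpha> b x)"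
proof
  show "cov_form g (nlow s \<beta>) a b x = cov_form g (nlow s \<beta>) b a x" for \<beta> a b
    by (rule hessian_symmetric[OF x])
  show "(\<Sum>b\<in>UNIV. nup g s \<alpha> b x * cov_form g (nlow s \<beta>) a b x)
      = - (\<Sum>b\<in>UNIV. nup g s \<beta> b x * cov_form g (nlow s \<alpha>) a b x)" for \<alpha> \<beta> a
    using pd_gram[OF x, of a \<alpha> \<beta>] pd_gram_eq_0[OF GD metric_open[OF RM] x s_differentiable[OF x] s0]
    by (simp add: mult.commute eq_neg_iff_add_eq_0 add.commute)
qed

end


theorem mainTheorem6:
  fixes U Lam :: "(real^'d::finite) set"
    and g :: "real^'d \<Rightarrow> real^'d^'d"
    and s :: "'k::finite \<Rightarrow> real^'d \<Rightarrow> real"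
  assumes "riemannian_metric U g"
    and "defining_map U s Lam"
    and "gram_delta_Os2 U g s"
    and "x \<in> Lam"
  shows "(\<forall>a \<alpha> \<beta>. (\<Sum>b\<in>UNIV. nup g s \<alpha> b x * cov_form g (\<lambda>e. nlow s \<beta> e) a b x)
              = normal_ff g s a \<alpha> \<beta> x)
    \<and> (\<forall>a b \<beta>. cov_form g (\<lambda>e. nlow s \<beta> e) a b x
              = second_ff g s a b \<beta> x
                + (\<Sum>\<alpha>\<in>UNIV. nlow s \<alpha> b x * normal_ff g s a \<alpha> \<beta> x)
                + (\<Sum>\<alpha>\<in>UNIV. nlow s \<alpha> a x * normal_ff g s b \<alpha> \<beta> x))
    \<and> (\<forall>a \<alpha> \<beta>. lie_bracket (nup g s \<alpha>) (nup g s \<beta>) a x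
              = 2 * (\<Sum>b\<in>UNIV. ginv g x a b * normal_ff g s b \<alpha> \<beta> x))"
proof -
  have smooth: "\<And>\<alpha>. smooth_on U (s \<alpha>)" and x: "x \<in> U" and s0: "\<And>\<gamma>. s \<gamma> x = 0"
    using assms(2,4) unfolding defining_map_def by auto
  interpret normal_hessian "\<lambda>\<beta> a b. cov_form g (nlow s \<beta>) a b x" "\<lambda>\<alpha> b. nup g s \<alpha> b x"
    by (rule normal_hessian_on_zero_set[OF assms(1) smooth assms(3) x s0])
  have gbar: "gbar g s d a x = tangent_proj (\<lambda>\<alpha> b. nup g s \<alpha> b x) (\<lambda>\<alpha> b. nlow s \<alpha> b x) d a" for d a
    by (simp add: gbar_def tangent_proj_def)
  show ?thesis
  proof (intro conjI allI)
    fix a \<alpha> \<beta>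
    show "(\<Sum>b\<in>UNIV. nup g s \<alpha> b x * cov_form g (nlow s \<beta>) a b x) = normal_ff g s a \<alpha> \<beta> x"
      unfolding normal_ff_def gbar contract_tangent_proj ..
    show "lie_bracket (nup g s \<alpha>) (nup g s \<beta>) a x = 2 * (\<Sum>b\<in>UNIV. ginv g x a b * normal_ff g s b \<alpha> \<beta> x)"
      unfolding lie_bracket_def pd_nup[OF assms(1) smooth x] normal_ff_def gbar
      by (rule contract_bracket) (rule Gamma_symmetric[OF assms(1) x])
  next
    fix a b \<beta>
    show "cov_form g (nlow s \<beta>) a b x = second_ff g s a b \<beta> x
        + (\<Sum>\<alpha>\<in>UNIV. nlow s \<alpha> b x * normal_ff g s a \<alpha> \<beta> x)
        + (\<Sum>\<alpha>\<in>UNIV. nlow s \<alpha> a x * normal_ff g s b \<alpha> \<beta> x)"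
      unfolding second_ff_def gbar_low_def normal_ff_def gbar cov_vec_nup[OF assms(1) smooth x]
      by (rule tangent_normal_decomposition[OF _ ginv_symmetric[OF assms(1) x] metric_ginv_contract[OF assms(1) x]])
        (simp add: nup_def)
  qed
qed

end
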